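(* Let $\mathfrak{h}$ be a Lie subalgebra of finite codimension in $\mathfrak{sl}_2(\mathbb{K}[\lambda])\cong\mathfrak{sl}_2(\mathbb{K})\otimes_{\mathbb{K}}\mathbb{K}[\lambda]$. Then every solvable ideal of $\mathfrak{h}$ is zero.
   Context: $\mathbb{K}$ is $\mathbb{C}$ or $\mathbb{R}$; $\mathbb{K}[\lambda]$ is the polynomial algebra in $\lambda$, and $\mathfrak{sl}_2(\mathbb{K}[\lambda])$ has bracket $[y_1\otimes f_1,y_2\otimes f_2]=[y_1,y_2]\otimes f_1f_2$. *)

theory Defs
  imports "HOL-Analysis.Analysis" "HOL-Computational_Algebra.Polynomial"
begin

text \<open>Elements of sl_2(K[lambda]): 2x2 matrices with entries in K[lambda] and trace 0.
  Lie algebra over K with the commutator bracket; K acts by scaling all entries.\<close>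

type_synonym 'k mat2p = "'k poly ^ 2 ^ 2"

definition sl2 :: "('k::field) mat2p set" where
  "sl2 = {A. trace A = 0}"

definition lie :: "('k::field) mat2p \<Rightarrow> 'k mat2p \<Rightarrow> 'k mat2p" where
  "lie A B = A ** B - B ** A"

definition ksmult :: "'k::field \<Rightarrow> 'k mat2p \<Rightarrow> 'k mat2p" where
  "ksmult c A = (\<chi> i j. smult c (A $ i $ j))"

definition kspan :: "('k::field) mat2p set \<Rightarrow> 'k mat2p set" where
  "kspan S = {x. \<exists>vs cs. set vs \<subseteq> S \<and> length cs = length vs \<and>
      x = (\<Sum>i<length vs. ksmult (cs ! i) (vs ! i))}"

definition ksubspace :: "('k::field) mat2p set \<Rightarrow> bool" where
  "ksubspace V \<longleftrightarrow> 0 \<in> V \<and> (\<forall>x\<in>V. \<forall>y\<in>V. x + y \<in> V) \<and> (\<forall>c. \<forall>x\<in>V. ksmult c x \<in> V)"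

definition lie_subalgebra :: "('k::field) mat2p set \<Rightarrow> bool" where
  "lie_subalgebra h \<longleftrightarrow> h \<subseteq> sl2 \<and> ksubspace h \<and> (\<forall>x\<in>h. \<forall>y\<in>h. lie x y \<in> h)"

definition finite_codim :: "('k::field) mat2p set \<Rightarrow> bool" where
  "finite_codim h \<longleftrightarrow> (\<exists>F. finite F \<and> F \<subseteq> sl2 \<and> (\<forall>x\<in>sl2. \<exists>f\<in>kspan F. x - f \<in> h))"

definition lie_ideal :: "('k::field) mat2p set \<Rightarrow> 'k mat2p set \<Rightarrow> bool" where
  "lie_ideal I h \<longleftrightarrow> I \<subseteq> h \<and> ksubspace I \<and> (\<forall>x\<in>h. \<forall>y\<in>I. lie x y \<in> I)"

fun derived :: "('k::field) mat2p set \<Rightarrow> nat \<Rightarrow> 'k mat2p set" where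
  "derived I 0 = I"
| "derived I (Suc n) = kspan {lie x y | x y. x \<in> derived I n \<and> y \<in> derived I n}"

definition lie_solvable :: "('k::field) mat2p set \<Rightarrow> bool" where
  "lie_solvable I \<longleftrightarrow> (\<exists>n. derived I n = {0})"

end

theory Submission
  imports Defs
begin

text \<open>A nonzero solvable ideal of \<open>h\<close> contains a nonzero abelian ideal \<open>J\<close> of \<open>h\<close>, namely the
  last nonzero term of its derived series. For \<open>0 \<noteq> a \<in> J\<close> the map \<open>y \<mapsto> [[y, a], a]\<close> vanishes
  on \<open>h\<close>, and it is \<open>K[\<lambda>]\<close>-linear. A \<open>K[\<lambda>]\<close>-linear map vanishing on a subspace of finite
  codimension vanishes on all of \<open>sl\<^sub>2(K[\<lambda>])\<close>: the images of a finite complement have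
  bounded degree, whereas multiplying \<open>y\<close> by a high power of \<open>\<lambda>\<close> raises the degree of its image.
  But in characteristic 0, \<open>(ad a)\<^sup>2\<close> does not vanish on \<open>sl\<^sub>2\<close> unless \<open>a = 0\<close>.\<close>

definition pmult :: "'k::field poly \<Rightarrow> 'k mat2p \<Rightarrow> 'k mat2p" where
  "pmult p A = (\<chi> i j. p * A $ i $ j)"

definition mat_degree_le :: "nat \<Rightarrow> 'k::field mat2p set" where
  "mat_degree_le D = {A. \<forall>i j. degree (A $ i $ j) \<le> D}"

lemma ksmult_eq_pmult: "ksmult c A = pmult [:c:] A"
  by (simp add: ksmult_def pmult_def)

lemma mat2_eq_iff:
  "(A::'a^2^2) = B \<longleftrightarrow> A$1$1 = B$1$1 \<and> A$1$2 = B$1$2 \<and> A$2$1 = B$2$1 \<and> A$2$2 = B$2$2"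
  by (auto simp: vec_eq_iff forall_2)

lemma mat2_mult_nth: "((A::'a::semiring_1^2^2) ** B) $ i $ j = A$i$1 * B$1$j + A$i$2 * B$2$j"
  by (simp add: matrix_matrix_mult_def sum_2)

lemma trace_mat2: "trace (A::'a::semiring_1^2^2) = A$1$1 + A$2$2"
  by (simp add: trace_def sum_2)

lemmas mat2_simps = mat2_eq_iff mat2_mult_nth pmult_def lie_def

lemma lie_add_left: "lie (x + y) z = lie x z + lie y z"
  by (simp add: mat2_simps algebra_simps)

lemma lie_add_right: "lie x (y + z) = lie x y + lie x z"
  by (simp add: mat2_simps algebra_simps)

lemma lie_pmult_left: "lie (pmult p x) y = pmult p (lie x y)"
  by (simp add: mat2_simps algebra_simps)

lemma lie_pmult_right: "lie x (pmult p y) = pmult p (lie x y)"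
  by (simp add: mat2_simps algebra_simps)

lemma lie_jacobi: "lie x (lie y z) = lie (lie x y) z + lie y (lie x z)"
  by (simp add: mat2_simps algebra_simps)

lemma sl2_pmult: "A \<in> sl2 \<Longrightarrow> pmult p A \<in> sl2"
  by (simp add: sl2_def trace_mat2 pmult_def distrib_left[symmetric])

lemma ksmult_ksmult: "ksmult c (ksmult d A) = ksmult (c * d) A"
  by (simp add: ksmult_def vec_eq_iff)

lemma ksmult_sum_list: "ksmult c (sum_list xs) = sum_list (map (ksmult c) xs)"
  by (induct xs) (simp_all add: ksmult_def vec_eq_iff smult_add_right)

lemma kspan_eq_sum_list:
  "kspan S = {sum_list (map (\<lambda>(c, v). ksmult c v) ps) | ps. snd ` set ps \<subseteq> S}"
proof -
  have sum_eq: "sum_list (map (\<lambda>(c, v). ksmult c v) ps)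
      = (\<Sum>i<length ps. ksmult (fst (ps ! i)) (snd (ps ! i)))" for ps :: "('a \<times> 'a mat2p) list"
    by (simp add: sum_list_sum_nth atLeast0LessThan case_prod_unfold)
  show ?thesis
  proof (intro set_eqI iffI)
    fix x assume "x \<in> kspan S"
    then obtain vs cs where "set vs \<subseteq> S" "length cs = length vs"
        "x = (\<Sum>i<length vs. ksmult (cs ! i) (vs ! i))"
      unfolding kspan_def by blast
    then show "x \<in> {sum_list (map (\<lambda>(c, v). ksmult c v) ps) | ps. snd ` set ps \<subseteq> S}"
      by (intro CollectI exI[of _ "zip cs vs"]) (simp add: sum_eq flip: set_map)
  next
    fix x assume "x \<in> {sum_list (map (\<lambda>(c, v). ksmult c v) ps) | ps. snd ` set ps \<subseteq> S}"
    then obtain ps where "snd ` set ps \<subseteq> S" "x = sum_list (map (\<lambda>(c, v). ksmult c v) ps)"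
      by blast
    then show "x \<in> kspan S"
      unfolding kspan_def
      by (intro CollectI exI[of _ "map snd ps"] exI[of _ "map fst ps"]) (simp add: sum_eq)
  qed
qed

lemma kspan_superset: "S \<subseteq> kspan S"
proof
  fix s assume "s \<in> S"
  then show "s \<in> kspan S"
    unfolding kspan_eq_sum_list
    by (intro CollectI exI[of _ "[(1, s)]"]) (simp add: ksmult_def vec_eq_iff)
qed

lemma ksubspace_kspan: "ksubspace (kspan S)"
  unfolding ksubspace_def kspan_eq_sum_list
proof (intro conjI ballI allI)
  show "0 \<in> {sum_list (map (\<lambda>(c, v). ksmult c v) ps) | ps. snd ` set ps \<subseteq> S}"
    by (intro CollectI exI[of _ "[]"]) simp
next
  fix x y assume "x \<in> {sum_list (map (\<lambda>(c, v). ksmult c v) ps) | ps. snd ` set ps \<subseteq> S}"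
    and "y \<in> {sum_list (map (\<lambda>(c, v). ksmult c v) ps) | ps. snd ` set ps \<subseteq> S}"
  then obtain ps qs where "snd ` set ps \<subseteq> S" "x = sum_list (map (\<lambda>(c, v). ksmult c v) ps)"
      "snd ` set qs \<subseteq> S" "y = sum_list (map (\<lambda>(c, v). ksmult c v) qs)"
    by blast
  then show "x + y \<in> {sum_list (map (\<lambda>(c, v). ksmult c v) ps) | ps. snd ` set ps \<subseteq> S}"
    by (intro CollectI exI[of _ "ps @ qs"]) auto
next
  fix c x assume "x \<in> {sum_list (map (\<lambda>(c, v). ksmult c v) ps) | ps. snd ` set ps \<subseteq> S}"
  then obtain ps where "snd ` set ps \<subseteq> S" "x = sum_list (map (\<lambda>(c, v). ksmult c v) ps)"
    by blast
  then show "ksmult c x \<in> {sum_list (map (\<lambda>(c, v). ksmult c v) ps) | ps. snd ` set ps \<subseteq> S}"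
    by (intro CollectI exI[of _ "map (\<lambda>(d, v). (c * d, v)) ps"])
      (auto simp: ksmult_sum_list ksmult_ksmult o_def case_prod_unfold)
qed

lemma kspan_least:
  assumes V: "ksubspace V" and "S \<subseteq> V"
  shows "kspan S \<subseteq> V"
proof
  fix x assume "x \<in> kspan S"
  then obtain ps where "snd ` set ps \<subseteq> S" "x = sum_list (map (\<lambda>(c, v). ksmult c v) ps)"
    unfolding kspan_eq_sum_list by blast
  with \<open>S \<subseteq> V\<close> show "x \<in> V"
  proof (induct ps arbitrary: x)
    case Nil
    then show ?case using V by (simp add: ksubspace_def)
  next
    case (Cons p ps)
    then show ?case using V by (auto simp: ksubspace_def split: prod.splits)
  qed
qed

lemma ksubspace_vimage:
  assumes V: "ksubspace V"
    and add: "\<And>x y. f (x + y) = f x + f y"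
    and smult: "\<And>c x. f (ksmult c x) = ksmult c (f x)"
  shows "ksubspace (f -` V)"
proof -
  have "f 0 = 0"
    using add[of 0 0] by simp
  then show ?thesis
    using V by (simp add: ksubspace_def add smult)
qed

subsection \<open>The derived series\<close>

lemma lie_ideal_derived_Suc:
  assumes J: "lie_ideal J h"
  shows "lie_ideal (kspan {lie x y | x y. x \<in> J \<and> y \<in> J}) h"
proof -
  let ?S = "{lie x y | x y. x \<in> J \<and> y \<in> J}"
  have J_sub: "J \<subseteq> h" "ksubspace J" and J_closed: "\<And>x y. x \<in> h \<Longrightarrow> y \<in> J \<Longrightarrow> lie x y \<in> J"
    using J unfolding lie_ideal_def by auto
  have "?S \<subseteq> J"
    using J_sub J_closed by blast
  then have "kspan ?S \<subseteq> h"
    using kspan_least[OF \<open>ksubspace J\<close>] J_sub by blast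
  moreover have "lie x z \<in> kspan ?S" if "x \<in> h" "z \<in> kspan ?S" for x z
  proof -
    have "ksubspace (lie x -` kspan ?S)"
      by (rule ksubspace_vimage[OF ksubspace_kspan])
        (simp_all add: lie_add_right ksmult_eq_pmult lie_pmult_right)
    moreover have "?S \<subseteq> lie x -` kspan ?S"
    proof
      fix s assume "s \<in> ?S"
      then obtain u v where "s = lie u v" "u \<in> J" "v \<in> J"
        by blast
      moreover have "lie x u \<in> J" "lie x v \<in> J"
        using J_closed \<open>x \<in> h\<close> \<open>u \<in> J\<close> \<open>v \<in> J\<close> by blast+
      ultimately have "lie (lie x u) v \<in> ?S" "lie u (lie x v) \<in> ?S"
        by blast+
      then have "lie (lie x u) v \<in> kspan ?S" "lie u (lie x v) \<in> kspan ?S"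
        using kspan_superset[of ?S] by blast+
      then have "lie (lie x u) v + lie u (lie x v) \<in> kspan ?S"
        using ksubspace_kspan unfolding ksubspace_def by blast
      then show "s \<in> lie x -` kspan ?S"
        by (simp add: \<open>s = lie u v\<close> lie_jacobi[of x u v])
    qed
    ultimately have "kspan ?S \<subseteq> lie x -` kspan ?S"
      by (rule kspan_least)
    then show ?thesis
      using \<open>z \<in> kspan ?S\<close> by blast
  qed
  ultimately show ?thesis
    unfolding lie_ideal_def using ksubspace_kspan by blast
qed

lemma lie_ideal_derived:
  assumes "lie_ideal I h"
  shows "lie_ideal (derived I n) h"
proof (induct n)
  case 0
  show ?case using assms by simp
next
  case (Suc n)
  then show ?case unfolding derived.simps by (rule lie_ideal_derived_Suc)
qed

lemma solvable_ideal_contains_abelian_ideal: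
  assumes I: "lie_ideal I h" and "lie_solvable I" and "I \<noteq> {0}"
  obtains J where "lie_ideal J h" "J \<noteq> {0}" "\<And>x y. x \<in> J \<Longrightarrow> y \<in> J \<Longrightarrow> lie x y = 0"
proof -
  define n where "n = (LEAST n. derived I n = {0})"
  have n: "derived I n = {0}"
    using \<open>lie_solvable I\<close> unfolding n_def lie_solvable_def by (rule LeastI_ex)
  obtain m where "n = Suc m"
    using n \<open>I \<noteq> {0}\<close> by (cases n) auto
  then have "m < n"
    by simp
  then have "derived I m \<noteq> {0}"
    unfolding n_def by (rule not_less_Least)
  moreover have "lie x y = 0" if "x \<in> derived I m" "y \<in> derived I m" for x y
  proof -
    have "lie x y \<in> kspan {lie x y | x y. x \<in> derived I m \<and> y \<in> derived I m}"
      using that by (intro subsetD[OF kspan_superset]) blast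
    then show ?thesis
      using n \<open>n = Suc m\<close> by simp
  qed
  ultimately show thesis
    by (rule that[OF lie_ideal_derived[OF I]])
qed

subsection \<open>Linear maps vanishing on a subspace of finite codimension\<close>

lemma ksubspace_mat_degree_le: "ksubspace (mat_degree_le D)"
  by (auto simp: ksubspace_def mat_degree_le_def ksmult_def
      intro!: degree_add_le intro: order.trans[OF degree_smult_le])

lemma finite_imp_mat_degree_le:
  assumes "finite F"
  obtains D where "F \<subseteq> mat_degree_le D"
proof
  let ?degs = "(\<lambda>(A, i, j). degree (A $ i $ j)) ` (F \<times> UNIV \<times> UNIV)"
  have "degree (A $ i $ j) \<le> Max ?degs" if "A \<in> F" for A i j
    using assms that by (intro Max_ge) (auto intro!: image_eqI[where x = "(A, i, j)"])
  then show "F \<subseteq> mat_degree_le (Max ?degs)"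
    by (auto simp: mat_degree_le_def)
qed

lemma pmult_monom_not_mat_degree_le:
  assumes "A \<noteq> 0"
  shows "pmult (monom 1 (Suc D)) A \<notin> mat_degree_le D"
proof -
  obtain i j where "A $ i $ j \<noteq> 0"
    using assms by (auto simp: vec_eq_iff)
  then have "degree (monom 1 (Suc D) * A $ i $ j) > D"
    by (simp add: degree_mult_eq degree_monom_eq)
  then show ?thesis
    by (auto simp: mat_degree_le_def pmult_def not_le)
qed

lemma vanishing_on_finite_codim_imp_vanishing_on_sl2:
  fixes \<phi> :: "'k::field mat2p \<Rightarrow> 'k mat2p"
  assumes "finite_codim h"
    and add: "\<And>x y. \<phi> (x + y) = \<phi> x + \<phi> y"
    and pmult: "\<And>p x. \<phi> (pmult p x) = pmult p (\<phi> x)"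
    and vanish: "\<And>x. x \<in> h \<Longrightarrow> \<phi> x = 0"
    and "y \<in> sl2"
  shows "\<phi> y = 0"
proof (rule ccontr)
  assume "\<phi> y \<noteq> 0"
  obtain F where "finite F" and F: "\<And>x. x \<in> sl2 \<Longrightarrow> \<exists>f\<in>kspan F. x - f \<in> h"
    using \<open>finite_codim h\<close> unfolding finite_codim_def by blast
  have "finite (\<phi> ` F)"
    using \<open>finite F\<close> by simp
  then obtain D where "\<phi> ` F \<subseteq> mat_degree_le D"
    by (rule finite_imp_mat_degree_le)
  then have "F \<subseteq> \<phi> -` mat_degree_le D"
    by blast
  moreover have "ksubspace (\<phi> -` mat_degree_le D)"
    by (rule ksubspace_vimage[OF ksubspace_mat_degree_le add]) (simp add: ksmult_eq_pmult pmult)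
  ultimately have bounded: "kspan F \<subseteq> \<phi> -` mat_degree_le D"
    by (rule kspan_least[rotated])
  define y' where "y' = pmult (monom 1 (Suc D)) y"
  obtain f where "f \<in> kspan F" and "y' - f \<in> h"
    using F sl2_pmult[OF \<open>y \<in> sl2\<close>] unfolding y'_def by blast
  have "\<phi> y' = \<phi> f + \<phi> (y' - f)"
    by (simp flip: add)
  also have "\<dots> = \<phi> f"
    using vanish[OF \<open>y' - f \<in> h\<close>] by simp
  finally have "\<phi> y' \<in> mat_degree_le D"
    using bounded \<open>f \<in> kspan F\<close> by auto
  then show False
    using pmult_monom_not_mat_degree_le[OF \<open>\<phi> y \<noteq> 0\<close>] by (simp add: y'_def pmult)
qed

subsection \<open>Abelian ideals\<close>

lemma sl2_ad_square_nonzero: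
  fixes a :: "'k::field_char_0 mat2p"
  assumes "a \<in> sl2" and "a \<noteq> 0"
  obtains y where "y \<in> sl2" "lie (lie y a) a \<noteq> 0"
proof -
  define E :: "'k mat2p" where "E = (\<chi> i j. if i = 1 \<and> j = 2 then 1 else 0)"
  define F :: "'k mat2p" where "F = (\<chi> i j. if i = 2 \<and> j = 1 then 1 else 0)"
  have "E \<in> sl2" "F \<in> sl2"
    by (simp_all add: E_def F_def sl2_def trace_mat2)
  have a22: "a$2$2 = - a$1$1"
    using \<open>a \<in> sl2\<close> by (simp add: sl2_def trace_mat2 eq_neg_iff_add_eq_0 add.commute)
  have E21: "(lie (lie E a) a)$2$1 = - 2 * (a$2$1)\<^sup>2"
    and E12: "(lie (lie E a) a)$1$2 = 2 * a$1$2 * a$2$1 + 4 * (a$1$1)\<^sup>2"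
    and F12: "(lie (lie F a) a)$1$2 = - 2 * (a$1$2)\<^sup>2"
    using a22 by (simp_all add: E_def F_def lie_def mat2_mult_nth algebra_simps power2_eq_square)
  show thesis
  proof (cases "a$2$1 = 0 \<and> a$1$1 = 0")
    case True
    then have "a$1$2 \<noteq> 0"
      using \<open>a \<noteq> 0\<close> a22 by (auto simp: mat2_eq_iff)
    then have "lie (lie F a) a \<noteq> 0"
      using F12 by auto
    then show thesis
      by (rule that[OF \<open>F \<in> sl2\<close>])
  next
    case False
    then have "lie (lie E a) a \<noteq> 0"
      using E21 E12 by auto
    then show thesis
      by (rule that[OF \<open>E \<in> sl2\<close>])
  qed
qed

lemma abelian_ideal_of_finite_codim_trivial:
  fixes h J :: "'k::field_char_0 mat2p set"
  assumes h: "lie_subalgebra h" "finite_codim h" and J: "lie_ideal J h"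
    and abelian: "\<And>x y. x \<in> J \<Longrightarrow> y \<in> J \<Longrightarrow> lie x y = 0"
  shows "J = {0}"
proof -
  have "a = 0" if "a \<in> J" for a
  proof (rule ccontr)
    assume "a \<noteq> 0"
    have "a \<in> sl2"
      using h J \<open>a \<in> J\<close> unfolding lie_subalgebra_def lie_ideal_def by blast
    then obtain y where "y \<in> sl2" "lie (lie y a) a \<noteq> 0"
      using \<open>a \<noteq> 0\<close> by (rule sl2_ad_square_nonzero)
    moreover have "lie (lie y a) a = 0"
    proof (rule vanishing_on_finite_codim_imp_vanishing_on_sl2[where \<phi> = "\<lambda>y. lie (lie y a) a"])
      show "lie (lie x a) a = 0" if "x \<in> h" for x
        using abelian J \<open>a \<in> J\<close> \<open>x \<in> h\<close> unfolding lie_ideal_def by blast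
    qed (simp_all add: h \<open>y \<in> sl2\<close> lie_add_left lie_pmult_left)
    ultimately show False
      by simp
  qed
  moreover have "0 \<in> J"
    using J unfolding lie_ideal_def ksubspace_def by blast
  ultimately show ?thesis by blast
qed

lemma solvable_ideal_of_finite_codim_trivial:
  fixes h I :: "'k::field_char_0 mat2p set"
  assumes "lie_subalgebra h" "finite_codim h" "lie_ideal I h" "lie_solvable I"
  shows "I = {0}"
proof (rule ccontr)
  assume "I \<noteq> {0}"
  then obtain J where J: "lie_ideal J h" "J \<noteq> {0}"
      and abelian: "\<And>x y. x \<in> J \<Longrightarrow> y \<in> J \<Longrightarrow> lie x y = 0"
    using solvable_ideal_contains_abelian_ideal assms(3,4) by blast
  have "J = {0}"
    using assms(1,2) J(1) abelian by (rule abelian_ideal_of_finite_codim_trivial)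
  with J(2) show False
    by contradiction
qed

theorem lemma6p2:
  shows "(\<forall>(h :: real mat2p set) I. lie_subalgebra h \<and> finite_codim h \<and> lie_ideal I h \<and> lie_solvable I \<longrightarrow> I = {0})
       \<and> (\<forall>(h :: complex mat2p set) I. lie_subalgebra h \<and> finite_codim h \<and> lie_ideal I h \<and> lie_solvable I \<longrightarrow> I = {0})"
  by (intro conjI allI impI; elim conjE; rule solvable_ideal_of_finite_codim_trivial)

end
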